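(* Let $(G,H)$ be a strictly balanced rooted graph. Then: (i) There is a constant $\beta>0$ such that, for all $p=p(n)\in[0,1]$ with $p=O(n^{-1/d(G,H)+\beta})$, $$n^{\beta}\cdot\max_{G\subsetneq J\subsetneq H} n^{v_H-v_J}p^{e_H-e_J}\to 0 \quad (n\to\infty).$$ (ii) The graph $H-V(G)$, obtained from $H$ by deleting the vertices of $G$, is connected.
   Context: For a graph $F$, $v_F,e_F$ are its numbers of vertices and edges. A rooted graph $(G,H)$ consists of a graph $H$ and an induced subgraph $G\subseteq H$ (the root vertices), with $e_H>e_G$. For $G\subsetneq J\subseteq H$, $d(G,J)=(e_J-e_G)/(v_J-v_G)$. $(G,H)$ is strictly balanced if $d(G,J)<d(G,H)$ for all subgraphs $J$ with $G\subsetneq J\subsetneq H$. *)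

theory Defs
  imports Complex_Main "HOL-Library.Landau_Symbols"
begin

type_synonym 'a graph = "'a set \<times> 'a set set"

definition graph :: "'a graph \<Rightarrow> bool" where
  "graph F \<longleftrightarrow> finite (fst F) \<and>
     (\<forall>e\<in>snd F. \<exists>x y. x \<noteq> y \<and> x \<in> fst F \<and> y \<in> fst F \<and> e = {x, y})"

definition v_of :: "'a graph \<Rightarrow> nat" where
  "v_of F = card (fst F)"

definition e_of :: "'a graph \<Rightarrow> nat" where
  "e_of F = card (snd F)"

definition subgraph :: "'a graph \<Rightarrow> 'a graph \<Rightarrow> bool" where
  "subgraph J H \<longleftrightarrow> graph J \<and> graph H \<and> fst J \<subseteq> fst H \<and> snd J \<subseteq> snd H"

definition induced_subgraph :: "'a graph \<Rightarrow> 'a graph \<Rightarrow> bool" where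
  "induced_subgraph G H \<longleftrightarrow> subgraph G H \<and> snd G = {e \<in> snd H. e \<subseteq> fst G}"

definition rooted_graph :: "'a graph \<Rightarrow> 'a graph \<Rightarrow> bool" where
  "rooted_graph G H \<longleftrightarrow> graph H \<and> induced_subgraph G H \<and> e_of H > e_of G"

definition dens :: "'a graph \<Rightarrow> 'a graph \<Rightarrow> real" where
  "dens G J = (real (e_of J) - real (e_of G)) / (real (v_of J) - real (v_of G))"

definition between :: "'a graph \<Rightarrow> 'a graph \<Rightarrow> 'a graph set" where
  "between G H = {J. subgraph G J \<and> subgraph J H \<and> J \<noteq> G \<and> J \<noteq> H}"

definition strictly_balanced :: "'a graph \<Rightarrow> 'a graph \<Rightarrow> bool" where
  "strictly_balanced G H \<longleftrightarrow> rooted_graph G H \<and>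
     (\<forall>J\<in>between G H. dens G J < dens G H)"

definition max_term :: "'a graph \<Rightarrow> 'a graph \<Rightarrow> nat \<Rightarrow> real \<Rightarrow> real" where
  "max_term G H n p =
     (if between G H = {} then 0
      else Max ((\<lambda>J. real n ^ (v_of H - v_of J) * p ^ (e_of H - e_of J)) ` between G H))"

definition delete_vertices :: "'a graph \<Rightarrow> 'a set \<Rightarrow> 'a graph" where
  "delete_vertices H S = (fst H - S, {e \<in> snd H. e \<inter> S = {}})"

definition adj :: "'a graph \<Rightarrow> ('a \<times> 'a) set" where
  "adj F = {(x, y). {x, y} \<in> snd F}"

definition connected_graph :: "'a graph \<Rightarrow> bool" where
  "connected_graph F \<longleftrightarrow> (\<forall>x\<in>fst F. \<forall>y\<in>fst F. (x, y) \<in> (adj F)\<^sup>*)"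

end

theory Submission
  imports Defs
begin

text \<open>Write \<open>d = d(G,H)\<close>. Strict balance means that every intermediate \<open>J\<close> carries less
  than its share of the edges: \<open>e\<^sub>H - e\<^sub>J > d (v\<^sub>H - v\<^sub>J)\<close>. Hence for
  \<open>p = O(n\<^bsup>-1/d + \<beta>\<^esup>)\<close> the term of \<open>J\<close> is \<open>O(n\<^bsup>\<epsilon>\<^sub>J(\<beta>)\<^esup>)\<close> with an
  exponent \<open>\<epsilon>\<^sub>J(\<beta>)\<close> that is affine in \<open>\<beta>\<close> and negative at \<open>\<beta> = 0\<close>; as there are
  finitely many \<open>J\<close>, one small \<open>\<beta>\<close> works for all of them, and the maximum is bounded
  by the sum.

  If \<open>H - V(G)\<close> were disconnected, a component \<open>A\<close> and the rest \<open>B\<close> would give the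
  intermediate graphs \<open>H[V(G) \<union> A]\<close> and \<open>H[V(G) \<union> B]\<close>; since no edge joins \<open>A\<close> to
  \<open>B\<close>, their vertex and edge excesses over \<open>G\<close> add up to those of \<open>H\<close>, so they
  cannot both have density below \<open>d\<close>.\<close>

lemma graph_finite_edges: "graph F \<Longrightarrow> finite (snd F)"
proof -
  assume F: "graph F"
  then have "snd F \<subseteq> Pow (fst F)" unfolding graph_def by fastforce
  with F show ?thesis unfolding graph_def by (meson finite_Pow_iff finite_subset)
qed

lemma graph_edge_subset: "graph F \<Longrightarrow> e \<in> snd F \<Longrightarrow> e \<subseteq> fst F"
  unfolding graph_def by fastforce

lemma subgraph_card_le:
  assumes "subgraph J H"
  shows "v_of J \<le> v_of H" "e_of J \<le> e_of H"
  using assms graph_finite_edges[of H] unfolding subgraph_def graph_def v_of_def e_of_def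
  by (auto intro: card_mono)

lemma induced_subgraph_v_of_less:
  assumes "induced_subgraph G H" "subgraph G J" "subgraph J H" "J \<noteq> G"
  shows "v_of G < v_of J"
proof (rule ccontr)
  assume "\<not> v_of G < v_of J"
  with subgraph_card_le[OF assms(2)] have "card (fst G) = card (fst J)"
    unfolding v_of_def by simp
  with assms(2) have V: "fst G = fst J"
    unfolding subgraph_def graph_def by (metis card_subset_eq)
  have "snd J \<subseteq> snd G"
    using assms(1,3) graph_edge_subset[of J] V unfolding induced_subgraph_def subgraph_def by auto
  with assms(2) V have "J = G" unfolding subgraph_def by (simp add: prod_eq_iff)
  with assms(4) show False ..
qed

lemma rooted_graph_v_of_less:
  assumes "rooted_graph G H"
  shows "v_of G < v_of H"
proof -
  have "induced_subgraph G H" "graph H" "H \<noteq> G"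
    using assms unfolding rooted_graph_def by auto
  then show ?thesis
    using induced_subgraph_v_of_less[of G H H] unfolding induced_subgraph_def subgraph_def by simp
qed

lemma finite_between: "graph H \<Longrightarrow> finite (between G H)"
proof -
  assume "graph H"
  moreover have "between G H \<subseteq> Pow (fst H) \<times> Pow (snd H)"
    unfolding between_def subgraph_def by auto
  ultimately show ?thesis
    using graph_finite_edges unfolding graph_def by (metis finite_Pow_iff finite_SigmaI finite_subset)
qed

lemma dens_less_iff:
  assumes "v_of G < v_of J"
  shows "dens G J < d \<longleftrightarrow> real (e_of J) - real (e_of G) < d * (real (v_of J) - real (v_of G))"
  using assms unfolding dens_def by (simp add: divide_less_eq mult.commute)

lemma rooted_graph_excess:
  "rooted_graph G H \<Longrightarrow>
    real (e_of H) - real (e_of G) = dens G H * (real (v_of H) - real (v_of G))"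
  using rooted_graph_v_of_less[of G H] unfolding dens_def by simp

lemma rooted_graph_dens_pos: "rooted_graph G H \<Longrightarrow> dens G H > 0"
  using rooted_graph_v_of_less[of G H] unfolding rooted_graph_def dens_def by simp

lemma strictly_balanced_between_excess:
  assumes "strictly_balanced G H" "J \<in> between G H"
  shows "real (e_of J) - real (e_of G) < dens G H * (real (v_of J) - real (v_of G))"
proof -
  have "rooted_graph G H" "dens G J < dens G H"
    using assms unfolding strictly_balanced_def by auto
  moreover have "v_of G < v_of J"
    using assms(2) \<open>rooted_graph G H\<close> induced_subgraph_v_of_less[of G H J]
    unfolding between_def rooted_graph_def by auto
  ultimately show ?thesis
    using dens_less_iff by blast
qed

lemma strictly_balanced_excess_complement:
  assumes "strictly_balanced G H" "J \<in> between G H"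
  shows "dens G H * real (v_of H - v_of J) < real (e_of H - e_of J)"
proof -
  have "rooted_graph G H"
    using assms(1) unfolding strictly_balanced_def by simp
  moreover have "v_of J \<le> v_of H" "e_of J \<le> e_of H"
    using assms(2) subgraph_card_le[of J H] unfolding between_def by auto
  ultimately show ?thesis
    using strictly_balanced_between_excess[OF assms] rooted_graph_excess[of G H]
    by (simp add: of_nat_diff algebra_simps)
qed

lemma powr_mult_power_tendsto_zero:
  fixes p :: "nat \<Rightarrow> real" and a b :: nat and x \<beta> :: real
  assumes nonneg: "\<And>n. 0 \<le> p n" and bigO: "p \<in> O(\<lambda>n. real n powr x)"
    and exponent: "real a + \<beta> + real b * x < 0"
  shows "(\<lambda>n. real n powr \<beta> * (real n ^ a * p n ^ b)) \<longlonglongrightarrow> 0"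
proof -
  obtain c where "eventually (\<lambda>n. norm (p n) \<le> c * norm (real n powr x)) sequentially"
    using bigO by (elim landau_o.bigE)
  then have upper: "eventually (\<lambda>n. real n powr \<beta> * (real n ^ a * p n ^ b)
      \<le> c ^ b * real n powr (real a + \<beta> + real b * x)) sequentially"
    using eventually_gt_at_top[of 0]
  proof eventually_elim
    case (elim n)
    then have "p n ^ b \<le> (c * real n powr x) ^ b"
      using nonneg by (simp add: power_mono)
    also have "\<dots> = c ^ b * real n powr (real b * x)"
      using elim by (simp add: power_mult_distrib powr_power)
    finally have "real n powr \<beta> * (real n ^ a * p n ^ b)
        \<le> real n powr \<beta> * (real n ^ a * (c ^ b * real n powr (real b * x)))"
      by (simp add: mult_left_mono)
    also have "\<dots> = c ^ b * (real n powr \<beta> * real n powr real a * real n powr (real b * x))"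
      using elim by (simp add: powr_realpow)
    also have "\<dots> = c ^ b * real n powr (real a + \<beta> + real b * x)"
      by (simp add: powr_add algebra_simps)
    finally show ?case .
  qed
  have lower: "eventually (\<lambda>n. 0 \<le> real n powr \<beta> * (real n ^ a * p n ^ b)) sequentially"
    using nonneg by (intro always_eventually) simp
  have "(\<lambda>n. c ^ b * real n powr (real a + \<beta> + real b * x)) \<longlonglongrightarrow> 0"
    by (intro tendsto_mult_right_zero tendsto_neg_powr[OF exponent] filterlim_real_sequentially)
  with lower upper show ?thesis by (rule tendsto_sandwich[OF _ _ tendsto_const])
qed

lemma eventually_at_right_exponent_neg:
  fixes a b d :: real
  assumes "d > 0" "d * a < b"
  shows "eventually (\<lambda>\<beta>. a + \<beta> + b * (- 1 / d + \<beta>) < 0) (at_right 0)"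
proof -
  have "((\<lambda>\<beta>. a + \<beta> + b * (- 1 / d + \<beta>)) \<longlongrightarrow> a + 0 + b * (- 1 / d + 0)) (at_right 0)"
    by (intro tendsto_intros)
  moreover have "a + 0 + b * (- 1 / d + 0) < 0"
    using assms by (simp add: field_simps)
  ultimately show ?thesis by (rule order_tendstoD(2))
qed

lemma Max_image_le_sum:
  fixes f :: "'b \<Rightarrow> 'c::{ordered_comm_monoid_add, linorder}"
  assumes "finite A" "A \<noteq> {}" "\<And>x. x \<in> A \<Longrightarrow> 0 \<le> f x"
  shows "Max (f ` A) \<le> sum f A"
proof (subst Max_le_iff)
  show "\<forall>y\<in>f ` A. y \<le> sum f A"
    using assms sum_mono2[of A "{_}" f] by auto
qed (use assms in auto)

lemma max_term_bounds:
  assumes "graph H" "0 \<le> p"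
  shows "0 \<le> max_term G H n p"
    and "max_term G H n p \<le> (\<Sum>J\<in>between G H. real n ^ (v_of H - v_of J) * p ^ (e_of H - e_of J))"
proof -
  let ?t = "\<lambda>J. real n ^ (v_of H - v_of J) * p ^ (e_of H - e_of J)"
  have fin: "finite (between G H)" by (rule finite_between[OF assms(1)])
  show "0 \<le> max_term G H n p"
    using fin assms(2) unfolding max_term_def by (auto simp: Max_ge_iff)
  show "max_term G H n p \<le> sum ?t (between G H)"
    using fin assms(2) Max_image_le_sum[of "between G H" ?t] unfolding max_term_def by auto
qed

lemma strictly_balanced_max_term_tendsto_zero:
  assumes sb: "strictly_balanced G H"
  shows "\<exists>\<beta>>0. \<forall>p. (\<forall>n. 0 \<le> p n) \<and> p \<in> O(\<lambda>n. real n powr (- 1 / dens G H + \<beta>)) \<longrightarrow>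
           (\<lambda>n. real n powr \<beta> * max_term G H n (p n)) \<longlonglongrightarrow> 0"
proof -
  let ?d = "dens G H"
  let ?a = "\<lambda>J. v_of H - v_of J" and ?b = "\<lambda>J. e_of H - e_of J"
  let ?exponent_neg = "\<lambda>\<beta> J. real (?a J) + \<beta> + real (?b J) * (- 1 / ?d + \<beta>) < 0"
  have rooted: "rooted_graph G H"
    using sb unfolding strictly_balanced_def by simp
  then have H: "graph H"
    unfolding rooted_graph_def by simp
  have d: "?d > 0"
    by (rule rooted_graph_dens_pos[OF rooted])
  have fin: "finite (between G H)" by (rule finite_between[OF H])
  have "eventually (\<lambda>\<beta>. \<forall>J\<in>between G H. ?exponent_neg \<beta> J) (at_right 0)"
    using fin d strictly_balanced_excess_complement[OF sb]
    by (intro eventually_ball_finite ballI eventually_at_right_exponent_neg) auto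
  then have "eventually (\<lambda>\<beta>. \<beta> > 0 \<and> (\<forall>J\<in>between G H. ?exponent_neg \<beta> J)) (at_right 0)"
    by (intro eventually_conj eventually_at_right_less)
  then obtain \<beta> where \<beta>: "\<beta> > 0" "\<forall>J\<in>between G H. ?exponent_neg \<beta> J"
    using eventually_happens'[OF trivial_limit_at_right_real] by blast
  have "(\<lambda>n. real n powr \<beta> * max_term G H n (p n)) \<longlonglongrightarrow> 0"
    if p: "\<forall>n. 0 \<le> p n" "p \<in> O(\<lambda>n. real n powr (- 1 / ?d + \<beta>))" for p
  proof (rule tendsto_sandwich[OF _ _ tendsto_const])
    show "eventually (\<lambda>n. 0 \<le> real n powr \<beta> * max_term G H n (p n)) sequentially"
      using max_term_bounds(1)[OF H] p(1) by (intro always_eventually) simp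
    show "eventually (\<lambda>n. real n powr \<beta> * max_term G H n (p n)
        \<le> (\<Sum>J\<in>between G H. real n powr \<beta> * (real n ^ ?a J * p n ^ ?b J))) sequentially"
      using max_term_bounds(2)[OF H] p(1)
      by (intro always_eventually allI) (simp add: sum_distrib_left[symmetric] mult_left_mono)
    show "(\<lambda>n. \<Sum>J\<in>between G H. real n powr \<beta> * (real n ^ ?a J * p n ^ ?b J)) \<longlonglongrightarrow> 0"
      using \<beta>(2) p by (intro tendsto_null_sum powr_mult_power_tendsto_zero) auto
  qed
  with \<beta>(1) show ?thesis by blast
qed

definition induce :: "'a graph \<Rightarrow> 'a set \<Rightarrow> 'a graph" where
  "induce H T = (T, {e \<in> snd H. e \<subseteq> T})"

lemma graph_induce:
  assumes "graph H" "T \<subseteq> fst H"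
  shows "graph (induce H T)"
proof -
  have "finite T"
    using assms finite_subset unfolding graph_def by blast
  moreover have "\<exists>x y. x \<noteq> y \<and> x \<in> T \<and> y \<in> T \<and> e = {x, y}"
    if e: "e \<in> snd H" "e \<subseteq> T" for e
  proof -
    obtain x y where "x \<noteq> y" "e = {x, y}"
      using e(1) assms(1) unfolding graph_def by blast
    with e(2) show ?thesis by auto
  qed
  ultimately show ?thesis
    unfolding graph_def induce_def by simp
qed

lemma induce_in_between:
  assumes "induced_subgraph G H" "fst G \<subset> T" "T \<subset> fst H"
  shows "induce H T \<in> between G H"
proof -
  have "graph G" "graph H" "snd G = {e \<in> snd H. e \<subseteq> fst G}"
    using assms(1) unfolding induced_subgraph_def subgraph_def by auto
  moreover have "graph (induce H T)"
    using graph_induce assms(3) \<open>graph H\<close> by blast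
  moreover have "fst (induce H T) = T"
    unfolding induce_def by simp
  then have "induce H T \<noteq> G" "induce H T \<noteq> H"
    using assms(2,3) by auto
  ultimately show ?thesis
    using assms(2,3) unfolding between_def subgraph_def induce_def by auto
qed

lemma separating_component:
  assumes H: "graph H" and x: "x \<in> fst H - S"
    and disconnected: "(x, y) \<notin> (adj (delete_vertices H S))\<^sup>*"
  obtains A where "x \<in> A" "y \<notin> A" "A \<subseteq> fst H - S"
    "\<forall>e\<in>snd H. e \<subseteq> S \<union> A \<or> e \<subseteq> fst H - A"
proof
  let ?R = "(adj (delete_vertices H S))\<^sup>*"
  define A where "A = {z \<in> fst H - S. (x, z) \<in> ?R}"
  show "x \<in> A" "y \<notin> A" "A \<subseteq> fst H - S"
    using x disconnected unfolding A_def by auto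
  have closed: "w \<in> S \<union> A" if "{u, w} \<in> snd H" "u \<in> A" for u w
  proof (cases "w \<in> S")
    case False
    with that have "(u, w) \<in> adj (delete_vertices H S)"
      unfolding A_def adj_def delete_vertices_def by auto
    with that(2) have "(x, w) \<in> ?R"
      unfolding A_def by (auto intro: rtrancl_into_rtrancl)
    with False that(1) H show ?thesis
      unfolding A_def using graph_edge_subset by fastforce
  qed simp
  show "\<forall>e\<in>snd H. e \<subseteq> S \<union> A \<or> e \<subseteq> fst H - A"
  proof
    fix e assume e: "e \<in> snd H"
    then obtain u w where "e = {u, w}" "u \<in> fst H" "w \<in> fst H"
      using H unfolding graph_def by blast
    with e closed[of u w] closed[of w u] show "e \<subseteq> S \<union> A \<or> e \<subseteq> fst H - A"
      by (auto simp: insert_commute)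
  qed
qed

lemma split_counts:
  assumes G: "induced_subgraph G H" and A: "A \<subseteq> fst H - fst G"
    and split: "\<forall>e\<in>snd H. e \<subseteq> fst G \<union> A \<or> e \<subseteq> fst H - A"
  shows "v_of (induce H (fst G \<union> A)) + v_of (induce H (fst H - A)) = v_of H + v_of G"
    and "e_of (induce H (fst G \<union> A)) + e_of (induce H (fst H - A)) = e_of H + e_of G"
proof -
  have H: "graph H" and GH: "fst G \<subseteq> fst H" and edges_G: "snd G = {e \<in> snd H. e \<subseteq> fst G}"
    using G unfolding induced_subgraph_def subgraph_def by auto
  have "finite (fst H)" "finite (snd H)"
    using H graph_finite_edges[OF H] unfolding graph_def by auto
  moreover have "(fst G \<union> A) \<union> (fst H - A) = fst H" "(fst G \<union> A) \<inter> (fst H - A) = fst G"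
    using A GH by auto
  ultimately show "v_of (induce H (fst G \<union> A)) + v_of (induce H (fst H - A)) = v_of H + v_of G"
    using card_Un_Int[of "fst G \<union> A" "fst H - A"] GH A
    unfolding v_of_def induce_def by (simp add: finite_subset)
  have "{e \<in> snd H. e \<subseteq> fst G \<union> A} \<union> {e \<in> snd H. e \<subseteq> fst H - A} = snd H"
    using split by auto
  moreover have "{e \<in> snd H. e \<subseteq> fst G \<union> A} \<inter> {e \<in> snd H. e \<subseteq> fst H - A} = snd G"
    using edges_G A GH by auto
  ultimately show "e_of (induce H (fst G \<union> A)) + e_of (induce H (fst H - A)) = e_of H + e_of G"
    using card_Un_Int[of "{e \<in> snd H. e \<subseteq> fst G \<union> A}" "{e \<in> snd H. e \<subseteq> fst H - A}"]
      \<open>finite (snd H)\<close> unfolding e_of_def induce_def by simp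
qed

lemma strictly_balanced_no_split:
  assumes sb: "strictly_balanced G H" and J: "J \<in> between G H" and K: "K \<in> between G H"
    and "v_of J + v_of K = v_of H + v_of G" "e_of J + e_of K = e_of H + e_of G"
  shows False
proof -
  let ?d = "dens G H"
  have v_sum: "(real (v_of J) - real (v_of G)) + (real (v_of K) - real (v_of G))
      = real (v_of H) - real (v_of G)"
    using arg_cong[OF assms(4), of real] by simp
  have "real (e_of H) - real (e_of G)
      = (real (e_of J) - real (e_of G)) + (real (e_of K) - real (e_of G))"
    using arg_cong[OF assms(5), of real] by simp
  also have "\<dots> < ?d * (real (v_of J) - real (v_of G)) + ?d * (real (v_of K) - real (v_of G))"
    by (intro add_strict_mono strictly_balanced_between_excess sb J K)
  also have "\<dots> = ?d * (real (v_of H) - real (v_of G))"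
    by (simp only: v_sum flip: distrib_left)
  finally have "real (e_of H) - real (e_of G) < ?d * (real (v_of H) - real (v_of G))" .
  moreover have "rooted_graph G H"
    using sb unfolding strictly_balanced_def by simp
  ultimately show False
    using rooted_graph_excess by fastforce
qed

lemma strictly_balanced_connected:
  assumes sb: "strictly_balanced G H"
  shows "connected_graph (delete_vertices H (fst G))"
  unfolding connected_graph_def
proof (intro ballI, rule ccontr)
  fix x y
  assume "x \<in> fst (delete_vertices H (fst G))" "y \<in> fst (delete_vertices H (fst G))"
    and "(x, y) \<notin> (adj (delete_vertices H (fst G)))\<^sup>*"
  moreover have G: "induced_subgraph G H" and "graph H"
    using sb unfolding strictly_balanced_def rooted_graph_def by auto
  ultimately obtain A where A: "x \<in> A" "y \<notin> A" "A \<subseteq> fst H - fst G"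
    and split: "\<forall>e\<in>snd H. e \<subseteq> fst G \<union> A \<or> e \<subseteq> fst H - A"
    using separating_component[of H x "fst G" y] unfolding delete_vertices_def by auto
  have "fst G \<subseteq> fst H"
    using G unfolding induced_subgraph_def subgraph_def by simp
  with A \<open>y \<in> fst (delete_vertices H (fst G))\<close> have
    "induce H (fst G \<union> A) \<in> between G H" "induce H (fst H - A) \<in> between G H"
    unfolding delete_vertices_def by (auto intro!: induce_in_between[OF G])
  from strictly_balanced_no_split[OF sb this split_counts[OF G A(3) split]] show False .
qed

theorem lemma11:
  fixes G H :: "'a graph"
  assumes "strictly_balanced G H"
  shows "(\<exists>\<beta>::real. \<beta> > 0 \<and>
           (\<forall>p :: nat \<Rightarrow> real.
              (\<forall>n. 0 \<le> p n \<and> p n \<le> 1) \<and>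
              p \<in> O(\<lambda>n. real n powr (- 1 / dens G H + \<beta>)) \<longrightarrow>
              ((\<lambda>n. real n powr \<beta> * max_term G H n (p n)) \<longlonglongrightarrow> 0)))
         \<and> connected_graph (delete_vertices H (fst G))"
  using strictly_balanced_max_term_tendsto_zero[OF assms] strictly_balanced_connected[OF assms]
  by blast

end
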